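(* Let $F$ be a violating edge set and let $(\mathcal{T},\mathcal{M},y)$ be a tree embedding sampled from $\mathcal{D}$. Then with probability at least $\frac12$ the tree is good with respect to $F$, i.e. $y(\mathcal{M}^{-1}(F))\le\frac12$.
   Context: Setting: $G=(V,E)$ is an undirected graph whose edges are partitioned into safe and unsafe edges; $p,q$ are nonnegative integers with $p+q\ge1$; $(s_i,t_i)$, $i\in[k]$, are terminal pairs; $H\subseteq E$ is such that every pair is $(p,q)$-flex-connected in $H$ (every cut $\delta_H(S)$ separating $s_i$ from $t_i$ has at least $p$ safe edges or at least $p+q$ edges). A violating edge set is $F=\delta_H(S)$ for some $S$ separating some pair $(s_i,t_i)$ with $|\delta_H(S)|=p+q$ and at most $p-1$ safe edges in $\delta_H(S)$. Let $\beta\ge1$ and let $\tilde x:E\to\mathbb{R}_{>0}$ be edge capacities with $\tilde x_e=\frac{1}{4(p+q)\beta}$ for every $e\in H$. A tree embedding of $(G,\tilde x)$ is a tree $\mathcal{T}$ with a map $\mathcal{M}_1:V(\mathcal{T})\to V$ that restricts to a bijection between the leaves of $\mathcal{T}$ and $V$, and a map $\mathcal{M}_2$ sending each tree edge $(a,b)$ to a path in $G$ between $\mathcal{M}_1(a)$ and $\mathcal{M}_1(b)$ (write $\mathcal{M}=(\mathcal{M}_1,\mathcal{M}_2)$). Its capacities are $y(f)=\tilde x(\delta_G(A'))$ for $f\in E(\mathcal{T})$, where $A'\subseteq V$ is the set of vertices corresponding to the leaves of one component of $\mathcal{T}-f$. For $e\in E$, $\mathcal{M}^{-1}(e)=\{f\in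 E(\mathcal{T}):e\in\mathcal{M}_2(f)\}$, $\mathrm{load}(e)=\sum_{f\in\mathcal{M}^{-1}(e)}y(f)$, and for $F\subseteq E$, $\mathcal{M}^{-1}(F)=\bigcup_{e\in F}\mathcal{M}^{-1}(e)$. $\mathcal{D}$ is a probability distribution over tree embeddings of $(G,\tilde x)$ such that $\mathbb{E}_{\mathcal{D}}[\mathrm{load}(e)/\tilde x_e]\le\beta$ for every $e\in E$. *)

theory Defs
  imports "HOL-Probability.Probability"
begin

definition graph :: "'v set \<Rightarrow> 'e set \<Rightarrow> ('e \<Rightarrow> 'v set) \<Rightarrow> bool" where
  "graph V E ends \<longleftrightarrow> finite V \<and> finite E \<and>
     (\<forall>e\<in>E. ends e \<subseteq> V \<and> card (ends e) = 2)"

definition cut :: "('e \<Rightarrow> 'v set) \<Rightarrow> 'e set \<Rightarrow> 'v set \<Rightarrow> 'e set" where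
  "cut ends X S = {e\<in>X. (\<exists>u\<in>ends e. u \<in> S) \<and> (\<exists>w\<in>ends e. w \<notin> S)}"

definition separates :: "'v set \<Rightarrow> 'v \<Rightarrow> 'v \<Rightarrow> bool" where
  "separates S s t \<longleftrightarrow> (s \<in> S \<and> t \<notin> S) \<or> (t \<in> S \<and> s \<notin> S)"

definition flex_connected ::
  "'v set \<Rightarrow> ('e \<Rightarrow> 'v set) \<Rightarrow> 'e set \<Rightarrow> nat \<Rightarrow> nat \<Rightarrow> 'e set \<Rightarrow> ('v \<times> 'v) set \<Rightarrow> bool" where
  "flex_connected V ends safe p q H P \<longleftrightarrow>
     (\<forall>(s,t)\<in>P. \<forall>S\<subseteq>V. separates S s t \<longrightarrow>
        card (cut ends H S \<inter> safe) \<ge> p \<or> card (cut ends H S) \<ge> p + q)"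

definition violating ::
  "'v set \<Rightarrow> ('e \<Rightarrow> 'v set) \<Rightarrow> 'e set \<Rightarrow> nat \<Rightarrow> nat \<Rightarrow> 'e set \<Rightarrow> ('v \<times> 'v) set \<Rightarrow> 'e set \<Rightarrow> bool" where
  "violating V ends safe p q H P F \<longleftrightarrow>
     (\<exists>S\<subseteq>V. \<exists>(s,t)\<in>P. separates S s t \<and> F = cut ends H S \<and>
        card (cut ends H S) = p + q \<and> card (cut ends H S \<inter> safe) < p)"

definition adj :: "'n set set \<Rightarrow> ('n \<times> 'n) set" where
  "adj TE = {(a,b). {a,b} \<in> TE \<and> a \<noteq> b}"

definition reach :: "'n set set \<Rightarrow> 'n \<Rightarrow> 'n \<Rightarrow> bool" where
  "reach TE a b \<longleftrightarrow> (a,b) \<in> (adj TE)\<^sup>*"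

definition is_tree :: "'n set \<Rightarrow> 'n set set \<Rightarrow> bool" where
  "is_tree N TE \<longleftrightarrow> finite N \<and> N \<noteq> {} \<and>
     (\<forall>f\<in>TE. f \<subseteq> N \<and> card f = 2) \<and>
     (\<forall>a\<in>N. \<forall>b\<in>N. reach TE a b) \<and>
     (\<forall>f\<in>TE. \<forall>a\<in>f. \<forall>b\<in>f. a \<noteq> b \<longrightarrow> \<not> reach (TE - {f}) a b)"

text \<open>Leaves: nodes of degree at most 1 (degree 0 only in the one-node tree).\<close>
definition leaves :: "'n set \<Rightarrow> 'n set set \<Rightarrow> 'n set" where
  "leaves N TE = {a\<in>N. card {f\<in>TE. a \<in> f} \<le> 1}"

definition is_path :: "'v set \<Rightarrow> 'e set \<Rightarrow> ('e \<Rightarrow> 'v set) \<Rightarrow> 'v \<Rightarrow> 'v \<Rightarrow> 'e list \<Rightarrow> bool" where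
  "is_path V E ends u v es \<longleftrightarrow>
     (\<exists>vs. length vs = length es + 1 \<and> hd vs = u \<and> last vs = v \<and> distinct vs \<and>
        set vs \<subseteq> V \<and> set es \<subseteq> E \<and>
        (\<forall>i<length es. ends (es ! i) = {vs ! i, vs ! Suc i}))"

type_synonym ('n,'v,'e) tree_emb = "'n set \<times> 'n set set \<times> ('n \<Rightarrow> 'v) \<times> ('n set \<Rightarrow> 'e list)"

definition tree_embedding :: "'v set \<Rightarrow> 'e set \<Rightarrow> ('e \<Rightarrow> 'v set) \<Rightarrow> ('n,'v,'e) tree_emb \<Rightarrow> bool" where
  "tree_embedding V E ends \<tau> \<longleftrightarrow> (case \<tau> of (N, TE, M1, M2) \<Rightarrow>
     is_tree N TE \<and> M1 ` N \<subseteq> V \<and> bij_betw M1 (leaves N TE) V \<and>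
     (\<forall>f\<in>TE. \<exists>a b. f = {a,b} \<and> is_path V E ends (M1 a) (M1 b) (M2 f)))"

text \<open>Capacity y(f) = x(delta_G(A')) where A' is the image of the leaves of
  the component of T - f containing a chosen endpoint of f.\<close>
definition tcap :: "('e \<Rightarrow> 'v set) \<Rightarrow> 'e set \<Rightarrow> ('e \<Rightarrow> real) \<Rightarrow> ('n,'v,'e) tree_emb \<Rightarrow> 'n set \<Rightarrow> real" where
  "tcap ends E x \<tau> f = (case \<tau> of (N, TE, M1, M2) \<Rightarrow>
     (let a = (SOME a. a \<in> f) in
      sum x (cut ends E (M1 ` {l\<in>leaves N TE. reach (TE - {f}) a l}))))"

definition preimage_edges :: "('n,'v,'e) tree_emb \<Rightarrow> 'e set \<Rightarrow> 'n set set" where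
  "preimage_edges \<tau> F = (case \<tau> of (N, TE, M1, M2) \<Rightarrow> {f\<in>TE. \<exists>e\<in>F. e \<in> set (M2 f)})"

definition load :: "('e \<Rightarrow> 'v set) \<Rightarrow> 'e set \<Rightarrow> ('e \<Rightarrow> real) \<Rightarrow> ('n,'v,'e) tree_emb \<Rightarrow> 'e \<Rightarrow> real" where
  "load ends E x \<tau> e = (\<Sum>f\<in>preimage_edges \<tau> {e}. tcap ends E x \<tau> f)"

end

theory Submission
  imports Defs
begin

text \<open>Every tree edge whose path meets \<open>F\<close> is counted in the load of some edge of \<open>F\<close>,
  so the capacity of the preimage of \<open>F\<close> is at most \<open>\<Sum>e\<in>F. load e\<close>. As \<open>x\<close> is the
  constant \<open>1/(4(p+q)\<beta>)\<close> on the \<open>p + q\<close> edges of \<open>F \<subseteq> H\<close>, the expectation of this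
  sum is at most \<open>\<beta> \<cdot> x(F) = 1/4\<close>, and Markov's inequality bounds the probability
  that the capacity exceeds \<open>1/2\<close> by \<open>1/2\<close>.\<close>

lemma measure_pmf_prob_le_Markov:
  fixes D :: "'a pmf" and Y :: "'a \<Rightarrow> real"
  assumes "(\<integral>\<^sup>+ \<tau>. ennreal (Y \<tau>) \<partial>measure_pmf D) \<le> ennreal a" and "0 \<le> a" and "0 < t"
  shows "1 - a / t \<le> measure_pmf.prob D {\<tau>. Y \<tau> \<le> t}"
proof -
  have "emeasure D {\<tau>. \<not> Y \<tau> \<le> t} \<le> emeasure D {\<tau>\<in>UNIV. 1 \<le> ennreal (1 / t) * ennreal (Y \<tau>)}"
  proof (rule emeasure_mono)
    show "{\<tau>. \<not> Y \<tau> \<le> t} \<subseteq> {\<tau>\<in>UNIV. 1 \<le> ennreal (1 / t) * ennreal (Y \<tau>)}"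
      using \<open>0 < t\<close> by (auto simp flip: ennreal_mult' simp: ennreal_1 [symmetric] simp del: ennreal_1)
  qed simp
  also have "\<dots> \<le> ennreal (1 / t) * (\<integral>\<^sup>+ \<tau>. ennreal (Y \<tau>) * indicator UNIV \<tau> \<partial>measure_pmf D)"
    by (rule nn_integral_Markov_inequality) auto
  also have "\<dots> \<le> ennreal (1 / t) * ennreal a"
    using assms(1) by (simp add: mult_left_mono)
  also have "\<dots> = ennreal (a / t)"
    using \<open>0 < t\<close> by (simp flip: ennreal_mult')
  finally have "measure_pmf.prob D {\<tau>. \<not> Y \<tau> \<le> t} \<le> a / t"
    using assms(2,3) by (simp add: measure_pmf.emeasure_eq_measure ennreal_le_iff)
  moreover have "measure_pmf.prob D {\<tau>. Y \<tau> \<le> t} = 1 - measure_pmf.prob D {\<tau>. \<not> Y \<tau> \<le> t}"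
    using measure_pmf.prob_compl[of "{\<tau>. \<not> Y \<tau> \<le> t}" D] by (simp add: set_diff_eq)
  ultimately show ?thesis by simp
qed

lemma sum_UN_le:
  fixes c :: "'a \<Rightarrow> 'b::ordered_comm_monoid_add"
  assumes "finite I" and "\<And>i. i \<in> I \<Longrightarrow> finite (B i)" and "\<And>a. 0 \<le> c a"
  shows "sum c (\<Union>i\<in>I. B i) \<le> (\<Sum>i\<in>I. sum c (B i))"
proof -
  have "(\<Union>i\<in>I. B i) = snd ` Sigma I B" by force
  also have "sum c \<dots> \<le> sum (c \<circ> snd) (Sigma I B)"
    using assms by (intro sum_image_le finite_SigmaI) auto
  also have "\<dots> = (\<Sum>i\<in>I. sum c (B i))"
    using assms by (simp add: sum.Sigma split_def)
  finally show ?thesis .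
qed

lemma nn_integral_ennreal_sum_le:
  fixes D :: "'a pmf" and g :: "'a \<Rightarrow> 'i \<Rightarrow> real"
  assumes "\<And>\<tau> i. i \<in> I \<Longrightarrow> 0 \<le> g \<tau> i" and "\<And>i. i \<in> I \<Longrightarrow> 0 \<le> b i"
    and "\<And>i. i \<in> I \<Longrightarrow> (\<integral>\<^sup>+ \<tau>. ennreal (g \<tau> i) \<partial>measure_pmf D) \<le> ennreal (b i)"
  shows "(\<integral>\<^sup>+ \<tau>. ennreal (\<Sum>i\<in>I. g \<tau> i) \<partial>measure_pmf D) \<le> ennreal (\<Sum>i\<in>I. b i)"
proof -
  have "ennreal (\<Sum>i\<in>I. g \<tau> i) = (\<Sum>i\<in>I. ennreal (g \<tau> i))" for \<tau>
    using assms(1) by (simp add: sum_ennreal)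
  then have "(\<integral>\<^sup>+ \<tau>. ennreal (\<Sum>i\<in>I. g \<tau> i) \<partial>measure_pmf D)
      = (\<Sum>i\<in>I. \<integral>\<^sup>+ \<tau>. ennreal (g \<tau> i) \<partial>measure_pmf D)"
    by (simp add: nn_integral_sum)
  also have "\<dots> \<le> (\<Sum>i\<in>I. ennreal (b i))"
    using assms(3) by (rule sum_mono)
  also have "\<dots> = ennreal (\<Sum>i\<in>I. b i)"
    using assms(2) by (simp add: sum_ennreal)
  finally show ?thesis .
qed

lemma nn_integral_ennreal_scale_le:
  fixes D :: "'a pmf" and g :: "'a \<Rightarrow> real"
  assumes "(\<integral>\<^sup>+ \<tau>. ennreal (g \<tau> / c) \<partial>measure_pmf D) \<le> ennreal \<beta>" and "0 < c"
  shows "(\<integral>\<^sup>+ \<tau>. ennreal (g \<tau>) \<partial>measure_pmf D) \<le> ennreal (c * \<beta>)"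
proof -
  have "(\<integral>\<^sup>+ \<tau>. ennreal (g \<tau>) \<partial>measure_pmf D)
      = (\<integral>\<^sup>+ \<tau>. ennreal c * ennreal (g \<tau> / c) \<partial>measure_pmf D)"
    using \<open>0 < c\<close> by (simp flip: ennreal_mult')
  also have "\<dots> = ennreal c * (\<integral>\<^sup>+ \<tau>. ennreal (g \<tau> / c) \<partial>measure_pmf D)"
    by (simp add: nn_integral_cmult)
  also have "\<dots> \<le> ennreal c * ennreal \<beta>"
    using assms(1) by (simp add: mult_left_mono)
  also have "\<dots> = ennreal (c * \<beta>)"
    using \<open>0 < c\<close> by (simp add: ennreal_mult')
  finally show ?thesis .
qed

lemma violating_subset_card:
  assumes "violating V ends safe p q H P F"
  shows "F \<subseteq> H" and "card F = p + q"
  using assms unfolding violating_def cut_def by auto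

lemma tcap_nonneg:
  assumes "\<forall>e\<in>E. 0 \<le> x e"
  shows "0 \<le> tcap ends E x \<tau> f"
  using assms unfolding tcap_def cut_def Let_def
  by (auto intro!: sum_nonneg split: prod.split)

lemma load_nonneg:
  assumes "\<forall>e\<in>E. 0 \<le> x e"
  shows "0 \<le> load ends E x \<tau> e"
  unfolding load_def by (intro sum_nonneg tcap_nonneg [OF assms])

lemma preimage_edges_UN: "preimage_edges \<tau> F = (\<Union>e\<in>F. preimage_edges \<tau> {e})"
  unfolding preimage_edges_def by (auto split: prod.split)

lemma finite_preimage_edges:
  assumes "tree_embedding V E ends \<tau>"
  shows "finite (preimage_edges \<tau> F)"
proof -
  obtain N TE M1 M2 where \<tau>: "\<tau> = (N, TE, M1, M2)" by (cases \<tau>) auto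
  have "finite N" and "TE \<subseteq> Pow N"
    using assms unfolding \<tau> tree_embedding_def is_tree_def by auto
  then have "finite TE" by (meson finite_Pow_iff finite_subset)
  then show ?thesis unfolding \<tau> preimage_edges_def by simp
qed

lemma sum_tcap_preimage_le_sum_load:
  assumes "tree_embedding V E ends \<tau>" and "\<forall>e\<in>E. 0 \<le> x e" and "finite F"
  shows "(\<Sum>f\<in>preimage_edges \<tau> F. tcap ends E x \<tau> f) \<le> (\<Sum>e\<in>F. load ends E x \<tau> e)"
  unfolding load_def preimage_edges_UN [of \<tau> F]
  using assms by (intro sum_UN_le finite_preimage_edges tcap_nonneg)

lemma nn_integral_sum_tcap_preimage_le:
  fixes D :: "('n,'v,'e) tree_emb pmf"
  assumes "\<forall>\<tau>\<in>set_pmf D. tree_embedding V E ends \<tau>" and "\<forall>e\<in>E. 0 < x e"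
    and "F \<subseteq> E" and "finite F" and "0 \<le> \<beta>"
    and "\<forall>e\<in>F. (\<integral>\<^sup>+ \<tau>. ennreal (load ends E x \<tau> e / x e) \<partial>measure_pmf D) \<le> ennreal \<beta>"
  shows "(\<integral>\<^sup>+ \<tau>. ennreal (\<Sum>f\<in>preimage_edges \<tau> F. tcap ends E x \<tau> f) \<partial>measure_pmf D)
           \<le> ennreal (\<beta> * sum x F)"
proof -
  have x_nonneg: "\<forall>e\<in>E. 0 \<le> x e"
    using assms(2) by (simp add: less_imp_le)
  have "(\<integral>\<^sup>+ \<tau>. ennreal (\<Sum>f\<in>preimage_edges \<tau> F. tcap ends E x \<tau> f) \<partial>measure_pmf D)
      \<le> (\<integral>\<^sup>+ \<tau>. ennreal (\<Sum>e\<in>F. load ends E x \<tau> e) \<partial>measure_pmf D)"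
    using assms(1,4) x_nonneg
    by (intro nn_integral_mono_AE)
      (auto simp: AE_measure_pmf_iff intro!: ennreal_leI sum_tcap_preimage_le_sum_load)
  also have "\<dots> \<le> ennreal (\<Sum>e\<in>F. x e * \<beta>)"
    using assms(2,3,5,6) x_nonneg
    by (intro nn_integral_ennreal_sum_le [where g = "load ends E x"] nn_integral_ennreal_scale_le)
      (auto intro: load_nonneg)
  finally show ?thesis
    by (simp add: sum_distrib_left mult.commute)
qed

theorem lemma4p2:
  fixes V :: "'v set" and E :: "'e set" and ends :: "'e \<Rightarrow> 'v set"
    and safe H F :: "'e set" and p q :: nat and P :: "('v \<times> 'v) set"
    and \<beta> :: real and x :: "'e \<Rightarrow> real"
    and D :: "('n,'v,'e) tree_emb pmf"
  assumes "graph V E ends"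
    and "safe \<subseteq> E"
    and "p + q \<ge> 1"
    and "P \<subseteq> V \<times> V"
    and "H \<subseteq> E"
    and "flex_connected V ends safe p q H P"
    and "violating V ends safe p q H P F"
    and "\<beta> \<ge> 1"
    and "\<forall>e\<in>E. x e > 0"
    and "\<forall>e\<in>H. x e = 1 / (4 * real (p + q) * \<beta>)"
    and "\<forall>\<tau>\<in>set_pmf D. tree_embedding V E ends \<tau>"
    and "\<forall>e\<in>E. (\<integral>\<^sup>+ \<tau>. ennreal (load ends E x \<tau> e / x e) \<partial>(measure_pmf D)) \<le> ennreal \<beta>"
  shows "measure_pmf.prob D
           {\<tau>. (\<Sum>f\<in>preimage_edges \<tau> F. tcap ends E x \<tau> f) \<le> 1/2} \<ge> 1/2"
proof -
  have "F \<subseteq> H" and "card F = p + q"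
    using violating_subset_card [OF assms(7)] by auto
  then have "F \<subseteq> E" and "finite F"
    using assms(3,5) by (auto intro!: card_ge_0_finite)
  have "(\<integral>\<^sup>+ \<tau>. ennreal (\<Sum>f\<in>preimage_edges \<tau> F. tcap ends E x \<tau> f) \<partial>measure_pmf D)
      \<le> ennreal (\<beta> * sum x F)"
    using assms(8,12) \<open>F \<subseteq> E\<close> \<open>finite F\<close>
    by (intro nn_integral_sum_tcap_preimage_le [OF assms(11,9)]) auto
  also have "sum x F = card F * (1 / (4 * real (p + q) * \<beta>))"
    using \<open>F \<subseteq> H\<close> assms(10) by (simp add: subset_iff)
  also have "\<beta> * \<dots> = 1/4"
    using \<open>card F = p + q\<close> assms(3,8) by simp
  finally have "1 - (1/4) / (1/2) \<le> measure_pmf.prob D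
      {\<tau>. (\<Sum>f\<in>preimage_edges \<tau> F. tcap ends E x \<tau> f) \<le> 1/2}"
    by (rule measure_pmf_prob_le_Markov) simp_all
  moreover have "1 - (1/4) / (1/2) = (1/2 :: real)"
    by simp
  ultimately show ?thesis
    by (simp only:)
qed

end
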